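(* Let $D_6=\langle r,s\mid r^6=s^2=1,\ srs=r^{-1}\rangle$ be the dihedral group of order $12$. Its subgroups up to conjugacy are $\{1\}$, three classes of subgroups of order 2, $C_2^{(1)},C_2^{(2)},C_2^{(3)}$ (represented by $\langle r^3\rangle,\langle s\rangle,\langle rs\rangle$), $C_3=\langle r^2\rangle$, $C_2^2=\langle r^3,s\rangle$, $C_6=\langle r\rangle$, two classes of subgroups isomorphic to $S_3$, $S_3^{(1)}=\langle r^2,s\rangle$ and $S_3^{(2)}=\langle r^2,rs\rangle$, and $D_6$. Then there is an isomorphism of $D_6$-lattices $$\mathbb{Z}[D_6]\oplus\mathbb{Z}[D_6/C_2^2]^{\oplus2}\oplus\mathbb{Z}[D_6/C_6]\oplus\mathbb{Z}[D_6/S_3^{(1)}]\oplus\mathbb{Z}[D_6/S_3^{(2)}]\simeq\mathbb{Z}[D_6/C_2^{(1)}]\oplus\mathbb{Z}[D_6/C_2^{(2)}]\oplus\mathbb{Z}[D_6/C_2^{(3)}]\oplus\mathbb{Z}[D_6/C_3]\oplus\mathbb{Z}^{\oplus2}.$$ In particular the Krull–Schmidt theorem fails for permutation $D_6$-lattices. *)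

theory Defs
  imports "HOL-Algebra.Algebra"
begin

text \<open>Element (a, e) with a in {0..5} stands for r^a s^e (e = True means s^1).
  Multiplication: r^a s^e * r^b s^f = r^(a + (-1)^e b) s^(e xor f).\<close>

definition D6_mult :: "int \<times> bool \<Rightarrow> int \<times> bool \<Rightarrow> int \<times> bool" where
  "D6_mult x y = ((fst x + (if snd x then - fst y else fst y)) mod 6, snd x \<noteq> snd y)"

definition D6 :: "(int \<times> bool) monoid" where
  "D6 = \<lparr> partial_object.carrier = {0..5} \<times> (UNIV :: bool set), monoid.mult = D6_mult, monoid.one = (0, False) \<rparr>"

definition rD6 :: "int \<times> bool" where "rD6 = (1, False)"
definition sD6 :: "int \<times> bool" where "sD6 = (0, True)"

definition left_cosets :: "('a, 'b) monoid_scheme \<Rightarrow> 'a set \<Rightarrow> 'a set set" where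
  "left_cosets G H = {g <#\<^bsub>G\<^esub> H | g. g \<in> carrier G}"

text \<open>The G-set  G/H_0 \<squnion> ... \<squnion> G/H_(k-1)  for a list of subgroups Hs,
  realised as pairs (index, coset).\<close>
definition perm_set :: "('a, 'b) monoid_scheme \<Rightarrow> 'a set list \<Rightarrow> (nat \<times> 'a set) set" where
  "perm_set G Hs = {(i, C). i < length Hs \<and> C \<in> left_cosets G (Hs ! i)}"

text \<open>The permutation lattice Z[G/H_0] \<oplus> ... \<oplus> Z[G/H_(k-1)]: integer-valued
  functions on the (finite) G-set, extended by zero.\<close>
definition perm_lattice :: "('a, 'b) monoid_scheme \<Rightarrow> 'a set list \<Rightarrow> (nat \<times> 'a set \<Rightarrow> int) set" where
  "perm_lattice G Hs = {f. \<forall>x. x \<notin> perm_set G Hs \<longrightarrow> f x = 0}"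

definition perm_act ::
  "('a, 'b) monoid_scheme \<Rightarrow> 'a set list \<Rightarrow> 'a \<Rightarrow> (nat \<times> 'a set \<Rightarrow> int) \<Rightarrow> (nat \<times> 'a set \<Rightarrow> int)" where
  "perm_act G Hs g f = (\<lambda>(i, C). if (i, C) \<in> perm_set G Hs
                                  then f (i, (inv\<^bsub>G\<^esub> g) <#\<^bsub>G\<^esub> C) else 0)"

definition lattice_iso ::
  "('a, 'b) monoid_scheme \<Rightarrow> 'a set list \<Rightarrow> 'a set list
     \<Rightarrow> ((nat \<times> 'a set \<Rightarrow> int) \<Rightarrow> (nat \<times> 'a set \<Rightarrow> int)) \<Rightarrow> bool" where
  "lattice_iso G Hs Ks \<phi> \<longleftrightarrow>
     bij_betw \<phi> (perm_lattice G Hs) (perm_lattice G Ks) \<and>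
     (\<forall>f \<in> perm_lattice G Hs. \<forall>h \<in> perm_lattice G Hs. \<phi> (\<lambda>x. f x + h x) = (\<lambda>x. \<phi> f x + \<phi> h x)) \<and>
     (\<forall>c::int. \<forall>f \<in> perm_lattice G Hs. \<phi> (\<lambda>x. c * f x) = (\<lambda>x. c * \<phi> f x)) \<and>
     (\<forall>g \<in> carrier G. \<forall>f \<in> perm_lattice G Hs. \<phi> (perm_act G Hs g f) = perm_act G Ks g (\<phi> f))"

definition isomorphic_lattices :: "('a, 'b) monoid_scheme \<Rightarrow> 'a set list \<Rightarrow> 'a set list \<Rightarrow> bool" where
  "isomorphic_lattices G Hs Ks \<longleftrightarrow> (\<exists>\<phi>. lattice_iso G Hs Ks \<phi>)"

end

theory Submission
  imports Defs
begin

text \<open>The isomorphism is an explicit \<open>\<int>\<close>-linear map, given by a \<open>24 \<times> 24\<close> integer matrix with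
  respect to the bases of cosets on both sides, whose inverse is again integral. Since
  \<open>D\<^sub>6 = \<langle>r, s\<rangle>\<close> and the elements commuting with a fixed linear map form a subgroup,
  \<open>D\<^sub>6\<close>-equivariance only has to be checked for \<open>r\<close> and \<open>s\<close>; each of them permutes the
  coset bases, and equivariance means that the matrix is invariant under the two induced
  permutations of rows and columns. What remains are finite computations.\<close>

section \<open>Linear maps given by matrices\<close>

definition matrix_map :: "int list list \<Rightarrow> 'x list \<Rightarrow> 'y list \<Rightarrow> ('x \<Rightarrow> int) \<Rightarrow> 'y \<Rightarrow> int" where
  "matrix_map A B B' f = (\<lambda>y. if y \<in> set B'
     then \<Sum>k<length B. A ! (inv_into {..<length B'} ((!) B') y) ! k * f (B ! k) else 0)"

lemma matrix_map_nth:
  assumes "distinct B'" "a < length B'"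
  shows "matrix_map A B B' f (B' ! a) = (\<Sum>k<length B. A ! a ! k * f (B ! k))"
  using assms inv_into_f_f[OF inj_on_nth[of B' "{..<length B'}"]] by (simp add: matrix_map_def)

lemma matrix_map_outside: "y \<notin> set B' \<Longrightarrow> matrix_map A B B' f y = 0"
  by (simp add: matrix_map_def)

lemma matrix_map_cong: "\<forall>x\<in>set B. f x = g x \<Longrightarrow> matrix_map A B B' f = matrix_map A B B' g"
  by (auto simp: matrix_map_def intro!: sum.cong)

lemma matrix_map_add: "matrix_map A B B' (\<lambda>x. f x + g x) = (\<lambda>y. matrix_map A B B' f y + matrix_map A B B' g y)"
  by (auto simp: matrix_map_def distrib_left sum.distrib)

lemma matrix_map_smult: "matrix_map A B B' (\<lambda>x. c * f x) = (\<lambda>y. c * matrix_map A B B' f y)"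
  by (auto simp: matrix_map_def sum_distrib_left mult.left_commute)

lemma matrix_map_inverse:
  assumes "distinct B" "distinct B'" and f: "\<forall>x. x \<notin> set B \<longrightarrow> f x = 0"
    and CA: "\<forall>a\<in>{..<length B}. \<forall>l\<in>{..<length B}.
               (\<Sum>k<length B'. C ! a ! k * A ! k ! l) = (if a = l then 1 else 0)"
  shows "matrix_map C B' B (matrix_map A B B' f) = f"
proof
  fix x
  show "matrix_map C B' B (matrix_map A B B' f) x = f x"
  proof (cases "x \<in> set B")
    case True
    then obtain a where a: "a < length B" "x = B ! a" by (auto simp: in_set_conv_nth)
    have "matrix_map C B' B (matrix_map A B B' f) x
        = (\<Sum>k<length B'. C ! a ! k * (\<Sum>l<length B. A ! k ! l * f (B ! l)))"
      using assms a by (simp add: matrix_map_nth)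
    also have "\<dots> = (\<Sum>l<length B. (\<Sum>k<length B'. C ! a ! k * A ! k ! l) * f (B ! l))"
      by (simp add: sum_distrib_left sum_distrib_right mult.assoc sum.swap[of _ "{..<length B}"])
    also have "\<dots> = (\<Sum>l<length B. if a = l then f (B ! l) else 0)"
      using CA a(1) by (intro sum.cong) auto
    also have "\<dots> = f x" using a by simp
    finally show ?thesis .
  qed (simp add: f matrix_map_outside)
qed

lemma matrix_map_transport:
  assumes B': "distinct B'" "a < length B'"
    and \<sigma>: "bij_betw \<sigma> {..<length B} {..<length B}" "\<forall>k<length B. B ! \<sigma> k = \<tau> (B ! k)"
    and \<sigma>': "\<forall>b<length B'. \<sigma>' b < length B' \<and> B' ! \<sigma>' b = \<tau>' (B' ! b)"
    and A: "\<forall>b<length B'. \<forall>k<length B. A ! \<sigma>' b ! \<sigma> k = A ! b ! k"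
  shows "matrix_map A B B' f (\<tau>' (B' ! a)) = matrix_map A B B' (f \<circ> \<tau>) (B' ! a)"
proof -
  have "matrix_map A B B' f (\<tau>' (B' ! a)) = (\<Sum>k<length B. A ! \<sigma>' a ! k * f (B ! k))"
    using \<sigma>' B' matrix_map_nth[OF B'(1), of "\<sigma>' a"] by metis
  also have "\<dots> = (\<Sum>k<length B. A ! \<sigma>' a ! \<sigma> k * f (B ! \<sigma> k))"
    using sum.reindex_bij_betw[OF \<sigma>(1), of "\<lambda>k. A ! \<sigma>' a ! k * f (B ! k)"] by simp
  also have "\<dots> = (\<Sum>k<length B. A ! a ! k * (f \<circ> \<tau>) (B ! k))"
    using A \<sigma>(2) B'(2) by (intro sum.cong) auto
  also have "\<dots> = matrix_map A B B' (f \<circ> \<tau>) (B' ! a)"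
    using B' by (simp add: matrix_map_nth)
  finally show ?thesis .
qed

section \<open>Permutation lattices\<close>

lemma perm_act_in_perm_lattice: "perm_act G Hs g f \<in> perm_lattice G Hs"
  by (auto simp: perm_act_def perm_lattice_def)

context group
begin

lemma perm_set_coset_subset:
  assumes "\<forall>H\<in>set Hs. H \<subseteq> carrier G" "(i, C) \<in> perm_set G Hs"
  shows "C \<subseteq> carrier G"
proof -
  obtain x where "i < length Hs" "x \<in> carrier G" "C = x <# Hs ! i"
    using assms(2) by (auto simp: perm_set_def left_cosets_def)
  then show ?thesis using assms(1) l_coset_subset_G by simp
qed

lemma perm_set_lcos:
  assumes Hs: "\<forall>H\<in>set Hs. H \<subseteq> carrier G" and C: "(i, C) \<in> perm_set G Hs" and g: "g \<in> carrier G"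
  shows "(i, g <# C) \<in> perm_set G Hs"
proof -
  obtain x where x: "i < length Hs" "x \<in> carrier G" "C = x <# Hs ! i"
    using C by (auto simp: perm_set_def left_cosets_def)
  then have "g <# C = (g \<otimes> x) <# Hs ! i" using Hs g by (simp add: lcos_m_assoc)
  then show ?thesis using x g by (auto simp: perm_set_def left_cosets_def)
qed

lemma perm_act_mult:
  assumes Hs: "\<forall>H\<in>set Hs. H \<subseteq> carrier G" and g: "g \<in> carrier G" and h: "h \<in> carrier G"
  shows "perm_act G Hs (g \<otimes> h) f = perm_act G Hs g (perm_act G Hs h f)"
proof
  fix y :: "nat \<times> 'a set"
  obtain i C where y: "y = (i, C)" by fastforce
  show "perm_act G Hs (g \<otimes> h) f y = perm_act G Hs g (perm_act G Hs h f) y"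
  proof (cases "(i, C) \<in> perm_set G Hs")
    case True
    then have "inv (g \<otimes> h) <# C = inv h <# (inv g <# C)"
      using perm_set_coset_subset[OF Hs] g h by (simp add: inv_mult_group lcos_m_assoc)
    then show ?thesis using True perm_set_lcos[OF Hs True] g y by (simp add: perm_act_def)
  qed (simp add: perm_act_def y)
qed

lemma perm_act_one:
  assumes "\<forall>H\<in>set Hs. H \<subseteq> carrier G" and "f \<in> perm_lattice G Hs"
  shows "perm_act G Hs \<one> f = f"
proof
  fix y :: "nat \<times> 'a set"
  obtain i C where y: "y = (i, C)" by fastforce
  show "perm_act G Hs \<one> f y = f y"
    using assms perm_set_coset_subset[OF assms(1), of i C]
    by (auto simp: perm_act_def perm_lattice_def y lcos_mult_one)
qed

lemma equivariant_elements_subgroup: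
  assumes Hs: "\<forall>H\<in>set Hs. H \<subseteq> carrier G" and Ks: "\<forall>K\<in>set Ks. K \<subseteq> carrier G"
    and \<phi>: "\<phi> \<in> perm_lattice G Hs \<rightarrow> perm_lattice G Ks"
  shows "subgroup {g \<in> carrier G. \<forall>f\<in>perm_lattice G Hs.
                     \<phi> (perm_act G Hs g f) = perm_act G Ks g (\<phi> f)} G"
    (is "subgroup ?E G")
proof (rule subgroupI)
  show "?E \<subseteq> carrier G" by blast
  show "?E \<noteq> {}"
  proof -
    have "\<one> \<in> ?E" using \<phi> by (auto simp: perm_act_one[OF Hs] perm_act_one[OF Ks] Pi_iff)
    then show ?thesis by blast
  qed
next
  fix g h assume g: "g \<in> ?E" and h: "h \<in> ?E"
  have "\<phi> (perm_act G Hs (g \<otimes> h) f) = perm_act G Ks (g \<otimes> h) (\<phi> f)"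
    if f: "f \<in> perm_lattice G Hs" for f
  proof -
    have "\<phi> (perm_act G Hs (g \<otimes> h) f) = \<phi> (perm_act G Hs g (perm_act G Hs h f))"
      using g h by (simp add: perm_act_mult[OF Hs])
    also have "\<dots> = perm_act G Ks g (\<phi> (perm_act G Hs h f))"
      using g perm_act_in_perm_lattice[of G Hs h f] by simp
    also have "\<dots> = perm_act G Ks (g \<otimes> h) (\<phi> f)"
      using g h f by (simp add: perm_act_mult[OF Ks])
    finally show ?thesis .
  qed
  then show "g \<otimes> h \<in> ?E" using g h by simp
next
  fix g assume g: "g \<in> ?E"
  then have gc: "g \<in> carrier G" by blast
  have "\<phi> (perm_act G Hs (inv g) f) = perm_act G Ks (inv g) (\<phi> f)" if f: "f \<in> perm_lattice G Hs" for f
  proof -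
    have "perm_act G Ks (inv g) (\<phi> f) = perm_act G Ks (inv g) (\<phi> (perm_act G Hs g (perm_act G Hs (inv g) f)))"
      using gc f by (simp add: perm_act_mult[OF Hs, symmetric] perm_act_one[OF Hs])
    also have "\<dots> = perm_act G Ks (inv g) (perm_act G Ks g (\<phi> (perm_act G Hs (inv g) f)))"
      using g perm_act_in_perm_lattice[of G Hs "inv g" f] by simp
    also have "\<dots> = perm_act G Ks (inv g \<otimes> g) (\<phi> (perm_act G Hs (inv g) f))"
      using gc by (simp only: perm_act_mult[OF Ks] inv_closed)
    also have "\<dots> = \<phi> (perm_act G Hs (inv g) f)"
      using gc \<phi> perm_act_in_perm_lattice[of G Hs "inv g" f] by (simp add: perm_act_one[OF Ks] Pi_iff)
    finally show ?thesis by simp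
  qed
  then show "inv g \<in> ?E" using g by simp
qed

lemma lattice_iso_by_generators:
  assumes Hs: "\<forall>H\<in>set Hs. H \<subseteq> carrier G" and Ks: "\<forall>K\<in>set Ks. K \<subseteq> carrier G"
    and bij: "bij_betw \<phi> (perm_lattice G Hs) (perm_lattice G Ks)"
    and add: "\<And>f h. \<phi> (\<lambda>x. f x + h x) = (\<lambda>x. \<phi> f x + \<phi> h x)"
    and smult: "\<And>c f. \<phi> (\<lambda>x. c * f x) = (\<lambda>x. c * \<phi> f x)"
    and S: "generate G S = carrier G"
    and equivariant: "\<forall>g\<in>S. \<forall>f\<in>perm_lattice G Hs. \<phi> (perm_act G Hs g f) = perm_act G Ks g (\<phi> f)"
  shows "lattice_iso G Hs Ks \<phi>"
proof -
  let ?E = "{g \<in> carrier G. \<forall>f\<in>perm_lattice G Hs. \<phi> (perm_act G Hs g f) = perm_act G Ks g (\<phi> f)}"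
  have "S \<subseteq> ?E" using equivariant S generate.incl[of _ S G] by blast
  then have "generate G S \<subseteq> ?E"
    using generate_subgroup_incl equivariant_elements_subgroup[OF Hs Ks bij_betw_imp_funcset[OF bij]]
    by blast
  then show ?thesis using bij add smult S by (auto simp: lattice_iso_def)
qed

end

section \<open>Bases of cosets from transversals\<close>

definition coset_of :: "('a, 'b) monoid_scheme \<Rightarrow> 'a set list \<Rightarrow> nat \<times> 'a \<Rightarrow> nat \<times> 'a set" where
  "coset_of G Hs = (\<lambda>(i, x). (i, x <#\<^bsub>G\<^esub> Hs ! i))"

definition coset_transversal :: "('a, 'b) monoid_scheme \<Rightarrow> 'a set list \<Rightarrow> (nat \<times> 'a) list \<Rightarrow> bool" where
  "coset_transversal G Hs R \<longleftrightarrow> distinct R \<and>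
     (\<forall>(i, x)\<in>set R. i < length Hs \<and> x \<in> carrier G) \<and>
     (\<forall>i\<in>{..<length Hs}. \<forall>g\<in>carrier G. \<exists>(j, x)\<in>set R. j = i \<and> g \<in> x <#\<^bsub>G\<^esub> Hs ! i) \<and>
     (\<forall>(i, x)\<in>set R. \<forall>(j, y)\<in>set R. i = j \<and> x \<in> y <#\<^bsub>G\<^esub> Hs ! i \<longrightarrow> x = y)"

definition transversal_permutation ::
  "('a, 'b) monoid_scheme \<Rightarrow> 'a set list \<Rightarrow> (nat \<times> 'a) list \<Rightarrow> 'a \<Rightarrow> nat list \<Rightarrow> bool" where
  "transversal_permutation G Hs R h p \<longleftrightarrow> distinct p \<and> set p = {..<length R} \<and>
     (\<forall>k\<in>{..<length R}. fst (R ! (p ! k)) = fst (R ! k) \<and>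
        h \<otimes>\<^bsub>G\<^esub> snd (R ! k) \<in> snd (R ! (p ! k)) <#\<^bsub>G\<^esub> Hs ! fst (R ! k))"

lemma transversal_permutation_nth_less:
  assumes "transversal_permutation G Hs R h p" "k < length R"
  shows "p ! k < length R"
  using assms distinct_card[of p] by (auto simp: transversal_permutation_def)

context group
begin

lemma coset_transversal_basis:
  assumes Hs: "\<forall>H\<in>set Hs. subgroup H G" and R: "coset_transversal G Hs R"
  shows "distinct (map (coset_of G Hs) R)" and "set (map (coset_of G Hs) R) = perm_set G Hs"
proof -
  have reps: "i < length Hs \<and> x \<in> carrier G" if "(i, x) \<in> set R" for i x
    using R that unfolding coset_transversal_def by blast
  have cover: "\<exists>x. (i, x) \<in> set R \<and> g \<in> x <# Hs ! i"
    if "i < length Hs" "g \<in> carrier G" for i g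
    using R that unfolding coset_transversal_def by blast
  have unique: "x = y" if "(i, x) \<in> set R" "(i, y) \<in> set R" "x \<in> y <# Hs ! i" for i x y
    using R that unfolding coset_transversal_def by blast
  have "inj_on (coset_of G Hs) (set R)"
  proof (rule inj_onI)
    fix u v assume u: "u \<in> set R" and v: "v \<in> set R" and eq: "coset_of G Hs u = coset_of G Hs v"
    obtain i x j y where uv: "u = (i, x)" "v = (j, y)" by fastforce
    have j: "j = i" and cos: "x <# Hs ! i = y <# Hs ! i" using eq uv by (auto simp: coset_of_def)
    have "subgroup (Hs ! i) G" "x \<in> carrier G" using Hs reps u uv by auto
    then have "x \<in> x <# Hs ! i" by (force simp: l_coset_def intro: subgroup.one_closed)
    then have "x = y" using unique u v uv j cos by simp
    then show "u = v" using uv j by simp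
  qed
  then show "distinct (map (coset_of G Hs) R)" using R by (simp add: coset_transversal_def distinct_map)
  show "set (map (coset_of G Hs) R) = perm_set G Hs"
  proof
    show "set (map (coset_of G Hs) R) \<subseteq> perm_set G Hs"
      using reps by (auto simp: coset_of_def perm_set_def left_cosets_def)
  next
    show "perm_set G Hs \<subseteq> set (map (coset_of G Hs) R)"
    proof
      fix c assume "c \<in> perm_set G Hs"
      then obtain i g where c: "c = (i, g <# Hs ! i)" "i < length Hs" "g \<in> carrier G"
        by (auto simp: perm_set_def left_cosets_def)
      then obtain x where x: "(i, x) \<in> set R" "g \<in> x <# Hs ! i" using cover by blast
      then have "x <# Hs ! i = g <# Hs ! i"
        using Hs reps c(2) by (intro l_repr_independence) auto
      then have "c = coset_of G Hs (i, x)" using c by (simp add: coset_of_def)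
      then show "c \<in> set (map (coset_of G Hs) R)" using x by simp
    qed
  qed
qed

lemma transversal_permutation_basis:
  assumes Hs: "\<forall>H\<in>set Hs. subgroup H G" and R: "coset_transversal G Hs R"
    and h: "h \<in> carrier G" and p: "transversal_permutation G Hs R h p" and k: "k < length R"
  shows "map (coset_of G Hs) R ! (p ! k)
           = (fst (map (coset_of G Hs) R ! k), h <# snd (map (coset_of G Hs) R ! k))"
proof -
  obtain i x where Rk: "R ! k = (i, x)" by fastforce
  obtain j y where Rpk: "R ! (p ! k) = (j, y)" by fastforce
  have pk: "p ! k < length R" using transversal_permutation_nth_less[OF p k] .
  have i: "i < length Hs" and x: "x \<in> carrier G" and y: "y \<in> carrier G"
    using R nth_mem[OF k] nth_mem[OF pk] by (auto simp: coset_transversal_def Rk Rpk)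
  have "fst (R ! (p ! k)) = fst (R ! k) \<and> h \<otimes> snd (R ! k) \<in> snd (R ! (p ! k)) <# Hs ! fst (R ! k)"
    using p k by (simp add: transversal_permutation_def)
  then have j: "j = i" and hx: "h \<otimes> x \<in> y <# Hs ! i" by (simp_all add: Rk Rpk)
  have H: "subgroup (Hs ! i) G" using Hs i by simp
  have "h <# (x <# Hs ! i) = (h \<otimes> x) <# Hs ! i"
    using H h x by (simp add: lcos_m_assoc subgroup.subset)
  also have "\<dots> = y <# Hs ! i"
    using l_repr_independence[OF hx y H] by simp
  finally have "h <# (x <# Hs ! i) = y <# Hs ! i" .
  then show ?thesis using k pk j by (simp add: coset_of_def Rk Rpk)
qed

lemma matrix_map_equivariant:
  assumes Hs: "\<forall>H\<in>set Hs. subgroup H G" and Ks: "\<forall>K\<in>set Ks. subgroup K G"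
    and R: "coset_transversal G Hs R" and R': "coset_transversal G Ks R'"
    and g: "g \<in> carrier G"
    and p: "transversal_permutation G Hs R (inv g) p" and p': "transversal_permutation G Ks R' (inv g) p'"
    and A: "\<forall>a\<in>{..<length R'}. \<forall>k\<in>{..<length R}. A ! (p' ! a) ! (p ! k) = A ! a ! k"
  defines "B \<equiv> map (coset_of G Hs) R" and "B' \<equiv> map (coset_of G Ks) R'"
  shows "matrix_map A B B' (perm_act G Hs g f) = perm_act G Ks g (matrix_map A B B' f)"
proof
  define \<tau> where "\<tau> y = (fst y, inv g <# snd y)" for y :: "nat \<times> 'a set"
  have B: "distinct B" "set B = perm_set G Hs" and B': "distinct B'" "set B' = perm_set G Ks"
    using coset_transversal_basis Hs Ks R R' by (simp_all add: B_def B'_def)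
  have act: "perm_act G Hs g f y = (f \<circ> \<tau>) y" if "y \<in> set B" for y
  proof -
    obtain i C where "y = (i, C)" by fastforce
    then show ?thesis using that B(2) by (simp add: perm_act_def \<tau>_def)
  qed
  fix y
  show "matrix_map A B B' (perm_act G Hs g f) y = perm_act G Ks g (matrix_map A B B' f) y"
  proof (cases "y \<in> set B'")
    case True
    then obtain a where a: "a < length B'" "y = B' ! a" by (auto simp: in_set_conv_nth)
    have \<sigma>: "bij_betw ((!) p) {..<length B} {..<length B}"
      using p by (intro bij_betw_nth) (auto simp: transversal_permutation_def B_def distinct_card[symmetric])
    have "matrix_map A B B' (perm_act G Hs g f) = matrix_map A B B' (f \<circ> \<tau>)"
      by (rule matrix_map_cong) (simp add: act)
    then have "matrix_map A B B' (perm_act G Hs g f) y = matrix_map A B B' (f \<circ> \<tau>) (B' ! a)"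
      using a by simp
    also have "\<dots> = matrix_map A B B' f (\<tau> (B' ! a))"
    proof (rule matrix_map_transport[OF B'(1) a(1) \<sigma>, symmetric])
      show "\<forall>k<length B. B ! (p ! k) = \<tau> (B ! k)"
        using transversal_permutation_basis[OF Hs R _ p] g by (simp add: B_def \<tau>_def)
      show "\<forall>b<length B'. p' ! b < length B' \<and> B' ! (p' ! b) = \<tau> (B' ! b)"
        using transversal_permutation_basis[OF Ks R' _ p'] transversal_permutation_nth_less[OF p'] g
        by (simp add: B'_def \<tau>_def)
      show "\<forall>b<length B'. \<forall>k<length B. A ! (p' ! b) ! (p ! k) = A ! b ! k"
        using A by (simp add: B_def B'_def)
    qed
    also have "\<dots> = perm_act G Ks g (matrix_map A B B' f) y"
    proof -
      obtain i C where iC: "B' ! a = (i, C)" by fastforce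
      then have "(i, C) \<in> perm_set G Ks" using True B'(2) a by simp
      then show ?thesis using a(2) iC by (simp add: perm_act_def \<tau>_def)
    qed
    finally show ?thesis .
  qed (cases y, simp add: matrix_map_outside perm_act_def B'(2))
qed

theorem isomorphic_lattices_by_matrix:
  fixes A C :: "int list list"
  assumes Hs: "\<forall>H\<in>set Hs. subgroup H G" and Ks: "\<forall>K\<in>set Ks. subgroup K G"
    and R: "coset_transversal G Hs R" and R': "coset_transversal G Ks R'"
    and CA: "\<forall>a\<in>{..<length R}. \<forall>l\<in>{..<length R}.
               (\<Sum>k<length R'. C ! a ! k * A ! k ! l) = (if a = l then 1 else 0)"
    and AC: "\<forall>a\<in>{..<length R'}. \<forall>l\<in>{..<length R'}.
               (\<Sum>k<length R. A ! a ! k * C ! k ! l) = (if a = l then 1 else 0)"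
    and S: "generate G S = carrier G"
    and perms: "\<forall>g\<in>S. \<exists>p p'. transversal_permutation G Hs R (inv g) p \<and>
                  transversal_permutation G Ks R' (inv g) p' \<and>
                  (\<forall>a\<in>{..<length R'}. \<forall>k\<in>{..<length R}. A ! (p' ! a) ! (p ! k) = A ! a ! k)"
  shows "isomorphic_lattices G Hs Ks"
proof -
  define B where "B = map (coset_of G Hs) R"
  define B' where "B' = map (coset_of G Ks) R'"
  have B: "distinct B" "set B = perm_set G Hs" and B': "distinct B'" "set B' = perm_set G Ks"
    using coset_transversal_basis Hs Ks R R' by (simp_all add: B_def B'_def)
  have lattice: "f \<in> perm_lattice G Hs \<longleftrightarrow> (\<forall>x. x \<notin> set B \<longrightarrow> f x = 0)"
    and lattice': "f' \<in> perm_lattice G Ks \<longleftrightarrow> (\<forall>x. x \<notin> set B' \<longrightarrow> f' x = 0)" for f f'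
    using B(2) B'(2) by (simp_all add: perm_lattice_def)
  have bij: "bij_betw (matrix_map A B B') (perm_lattice G Hs) (perm_lattice G Ks)"
  proof (rule bij_betwI[where g = "matrix_map C B' B"])
    show "matrix_map A B B' \<in> perm_lattice G Hs \<rightarrow> perm_lattice G Ks"
      and "matrix_map C B' B \<in> perm_lattice G Ks \<rightarrow> perm_lattice G Hs"
      by (simp_all add: lattice lattice' matrix_map_outside)
    show "matrix_map C B' B (matrix_map A B B' f) = f" if "f \<in> perm_lattice G Hs" for f
      using matrix_map_inverse[OF B(1) B'(1)] that CA by (simp add: lattice B_def B'_def)
    show "matrix_map A B B' (matrix_map C B' B f') = f'" if "f' \<in> perm_lattice G Ks" for f'
      using matrix_map_inverse[OF B'(1) B(1)] that AC by (simp add: lattice' B_def B'_def)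
  qed
  have equivariant: "\<forall>g\<in>S. \<forall>f\<in>perm_lattice G Hs.
      matrix_map A B B' (perm_act G Hs g f) = perm_act G Ks g (matrix_map A B B' f)"
  proof (intro ballI)
    fix g f assume g: "g \<in> S"
    then obtain p p' where "transversal_permutation G Hs R (inv g) p"
      "transversal_permutation G Ks R' (inv g) p'"
      "\<forall>a\<in>{..<length R'}. \<forall>k\<in>{..<length R}. A ! (p' ! a) ! (p ! k) = A ! a ! k"
      using perms by blast
    moreover have "g \<in> carrier G" using g S generate.incl[of g S G] by blast
    ultimately show "matrix_map A B B' (perm_act G Hs g f) = perm_act G Ks g (matrix_map A B B' f)"
      unfolding B_def B'_def using matrix_map_equivariant[OF Hs Ks R R'] by blast
  qed
  have "\<forall>H\<in>set Hs. H \<subseteq> carrier G" "\<forall>K\<in>set Ks. K \<subseteq> carrier G"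
    using Hs Ks subgroup.subset by blast+
  then have "lattice_iso G Hs Ks (matrix_map A B B')"
    using lattice_iso_by_generators[OF _ _ bij matrix_map_add matrix_map_smult S equivariant] by blast
  then show ?thesis by (auto simp: isomorphic_lattices_def)
qed

end

lemma (in group) generate_eq_set:
  assumes L: "set L \<subseteq> carrier G" "L \<noteq> []" and S: "S \<subseteq> set L"
    and closed: "\<forall>a\<in>set L. \<forall>b\<in>set L. a \<otimes> b \<in> set L"
    and inverses: "\<forall>a\<in>set L. \<exists>b\<in>set L. b \<otimes> a = \<one>"
    and chain: "\<forall>k\<in>{..<length L}. L ! k = \<one> \<or> (\<exists>j\<in>{..<k}. \<exists>t\<in>S. L ! k = L ! j \<otimes> t)"
  shows "generate G S = set L"
proof
  have "subgroup (set L) G"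
  proof (rule subgroupI)
    fix a assume a: "a \<in> set L"
    then obtain b where "b \<in> set L" "b \<otimes> a = \<one>" using inverses by blast
    moreover have "inv a = b" using calculation a L(1) by (intro inv_equality) auto
    ultimately show "inv a \<in> set L" by simp
  qed (use L closed in auto)
  then show "generate G S \<subseteq> set L" using S by (rule generate_subgroup_incl[rotated])
next
  have "L ! k \<in> generate G S" if "k < length L" for k
    using that
  proof (induction k rule: less_induct)
    case (less k)
    then consider "L ! k = \<one>" | j t where "j < k" "t \<in> S" "L ! k = L ! j \<otimes> t"
      using chain by blast
    then show ?case
    proof cases
      case 1
      then show ?thesis by (simp add: generate.one)
    next
      case 2
      then show ?thesis using less by (simp add: generate.eng generate.incl)
    qed
  qed
  then show "set L \<subseteq> generate G S" by (auto simp: in_set_conv_nth)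
qed

section \<open>The dihedral group of order 12\<close>

lemma carrier_D6: "carrier D6 = {0..5} \<times> UNIV"
  by (simp add: D6_def)

lemma carrier_D6_list: "carrier D6 = set (List.product [0..5] [False, True])"
  by (auto simp: carrier_D6)

lemma group_D6: "group D6"
proof -
  have closed: "\<forall>x\<in>carrier D6. \<forall>y\<in>carrier D6. x \<otimes>\<^bsub>D6\<^esub> y \<in> carrier D6"
    and assoc: "\<forall>x\<in>carrier D6. \<forall>y\<in>carrier D6. \<forall>z\<in>carrier D6.
                  x \<otimes>\<^bsub>D6\<^esub> y \<otimes>\<^bsub>D6\<^esub> z = x \<otimes>\<^bsub>D6\<^esub> (y \<otimes>\<^bsub>D6\<^esub> z)"
    and one: "\<one>\<^bsub>D6\<^esub> \<in> carrier D6" "\<forall>x\<in>carrier D6. \<one>\<^bsub>D6\<^esub> \<otimes>\<^bsub>D6\<^esub> x = x"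
    and inv: "\<forall>x\<in>carrier D6. \<exists>y\<in>carrier D6. y \<otimes>\<^bsub>D6\<^esub> x = \<one>\<^bsub>D6\<^esub>"
    unfolding carrier_D6_list by code_simp+
  show ?thesis
    by (rule groupI) (use closed assoc one inv in blast)+
qed

interpretation D6: group D6 by (rule group_D6)

lemma generate_D6_subgroups:
  "generate D6 {} = set [(0, False)]"
  "generate D6 {(3, False), (0, True)} = set [(0, False), (3, False), (0, True), (3, True)]"
  "generate D6 {(1, False)} = set [(0, False), (1, False), (2, False), (3, False), (4, False), (5, False)]"
  "generate D6 {(2, False), (0, True)} = set [(0, False), (2, False), (0, True), (4, False), (2, True), (4, True)]"
  "generate D6 {(2, False), (1, True)} = set [(0, False), (2, False), (1, True), (4, False), (3, True), (5, True)]"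
  "generate D6 {(3, False)} = set [(0, False), (3, False)]"
  "generate D6 {(0, True)} = set [(0, False), (0, True)]"
  "generate D6 {(1, True)} = set [(0, False), (1, True)]"
  "generate D6 {(2, False)} = set [(0, False), (2, False), (4, False)]"
  by (rule D6.generate_eq_set; (unfold carrier_D6_list)?; code_simp)+

lemma generate_D6_generators: "generate D6 {(1, False), (0, True)} = carrier D6"
  unfolding carrier_D6_list by (rule D6.generate_eq_set; (unfold carrier_D6_list)?; code_simp)

section \<open>The isomorphism\<close>

definition lhs_subgroups :: "(int \<times> bool) set list" where
  "lhs_subgroups = map (generate D6)
     [{}, {(3, False), (0, True)}, {(3, False), (0, True)}, {(1, False)},
      {(2, False), (0, True)}, {(2, False), (1, True)}]"

definition rhs_subgroups :: "(int \<times> bool) set list" where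
  "rhs_subgroups = map (generate D6)
     [{(3, False)}, {(0, True)}, {(1, True)}, {(2, False)},
      {(1, False), (0, True)}, {(1, False), (0, True)}]"

lemmas subgroup_lists_eval =
  lhs_subgroups_def rhs_subgroups_def list.map generate_D6_subgroups generate_D6_generators carrier_D6_list

lemma lattice_subgroups:
  "\<forall>H\<in>set lhs_subgroups. subgroup H D6" "\<forall>K\<in>set rhs_subgroups. subgroup K D6"
  by (auto simp: lhs_subgroups_def rhs_subgroups_def carrier_D6 intro!: D6.generate_is_subgroup)

text \<open>Column \<open>k\<close> of \<open>iso_matrix\<close> holds the coordinates, with respect to the cosets
  of \<open>rhs_transversal\<close>, of the image of the \<open>k\<close>-th coset of \<open>lhs_transversal\<close>. The
  permutations record the action of \<open>r\<^sup>-\<^sup>1 = (5, False)\<close> and \<open>s\<^sup>-\<^sup>1 = (0, True)\<close> on the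
  two bases.\<close>

definition lhs_transversal :: "(nat \<times> int \<times> bool) list" where
  "lhs_transversal =
    [(0, (0, False)), (0, (0, True)), (0, (1, False)), (0, (1, True)),
     (0, (2, False)), (0, (2, True)), (0, (3, False)), (0, (3, True)),
     (0, (4, False)), (0, (4, True)), (0, (5, False)), (0, (5, True)),
     (1, (0, False)), (1, (1, False)), (1, (2, False)), (2, (0, False)),
     (2, (1, False)), (2, (2, False)), (3, (0, False)), (3, (0, True)),
     (4, (0, False)), (4, (1, False)), (5, (0, False)), (5, (0, True))]"

definition rhs_transversal :: "(nat \<times> int \<times> bool) list" where
  "rhs_transversal =
    [(0, (0, False)), (0, (0, True)), (0, (1, False)), (0, (1, True)),
     (0, (2, False)), (0, (2, True)), (1, (0, False)), (1, (1, False)),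
     (1, (2, False)), (1, (3, False)), (1, (4, False)), (1, (5, False)),
     (2, (0, False)), (2, (0, True)), (2, (1, False)), (2, (2, False)),
     (2, (3, False)), (2, (4, False)), (3, (0, False)), (3, (0, True)),
     (3, (1, False)), (3, (1, True)), (4, (0, False)), (5, (0, False))]"

definition lhs_rotation_perm :: "nat list" where
  "lhs_rotation_perm = [10, 11, 0, 1, 2, 3, 4, 5, 6, 7, 8, 9, 14, 12, 13, 17, 15, 16, 18, 19, 21, 20, 23, 22]"

definition rhs_rotation_perm :: "nat list" where
  "rhs_rotation_perm = [4, 5, 0, 1, 2, 3, 11, 6, 7, 8, 9, 10, 13, 17, 12, 14, 15, 16, 20, 21, 18, 19, 22, 23]"

definition lhs_reflection_perm :: "nat list" where
  "lhs_reflection_perm = [1, 0, 11, 10, 9, 8, 7, 6, 5, 4, 3, 2, 12, 14, 13, 15, 17, 16, 19, 18, 20, 21, 23, 22]"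

definition rhs_reflection_perm :: "nat list" where
  "rhs_reflection_perm = [1, 0, 5, 4, 3, 2, 6, 11, 10, 9, 8, 7, 13, 12, 17, 16, 15, 14, 19, 18, 21, 20, 22, 23]"

definition iso_matrix :: "int list list" where
  "iso_matrix =
    [[-1, -1, 1, -2, 0, -2, -1, -1, 1, -2, 0, -2, 1, 2, 1, -1, 2, 0, 2, -1, 0, 0, -2, -2],
     [-1, -1, -2, 0, -2, 1, -1, -1, -2, 0, -2, 1, 1, 1, 2, -1, 0, 2, -1, 2, 0, 0, -2, -2],
     [0, -2, -1, -1, 1, -2, 0, -2, -1, -1, 1, -2, 1, 1, 2, 0, -1, 2, 2, -1, 0, 0, -2, -2],
     [-2, 1, -1, -1, -2, 0, -2, 1, -1, -1, -2, 0, 2, 1, 1, 2, -1, 0, -1, 2, 0, 0, -2, -2],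
     [1, -2, 0, -2, -1, -1, 1, -2, 0, -2, -1, -1, 2, 1, 1, 2, 0, -1, 2, -1, 0, 0, -2, -2],
     [-2, 0, -2, 1, -1, -1, -2, 0, -2, 1, -1, -1, 1, 2, 1, 0, 2, -1, -1, 2, 0, 0, -2, -2],
     [0, 0, 0, 0, 0, -1, 0, 0, -1, 0, 0, 0, -1, -1, -1, -1, -2, -2, 0, 0, 0, 1, 1, 1],
     [0, 0, 0, 0, 0, 0, 0, -1, 0, 0, -1, 0, -1, -1, -1, -2, -1, -2, 0, 0, 1, 0, 1, 1],
     [-1, 0, 0, 0, 0, 0, 0, 0, 0, -1, 0, 0, -1, -1, -1, -2, -2, -1, 0, 0, 0, 1, 1, 1],
     [0, 0, -1, 0, 0, 0, 0, 0, 0, 0, 0, -1, -1, -1, -1, -1, -2, -2, 0, 0, 1, 0, 1, 1],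
     [0, -1, 0, 0, -1, 0, 0, 0, 0, 0, 0, 0, -1, -1, -1, -2, -1, -2, 0, 0, 0, 1, 1, 1],
     [0, 0, 0, -1, 0, 0, -1, 0, 0, 0, 0, 0, -1, -1, -1, -2, -2, -1, 0, 0, 1, 0, 1, 1],
     [1, 1, 1, 1, 0, -2, -1, 2, 2, -1, -2, 0, 1, 1, 1, 2, 2, -1, 0, 0, -1, -1, 2, 1],
     [1, 1, 0, -2, -1, 2, 2, -1, -2, 0, 1, 1, 1, 1, 1, 2, -1, 2, 0, 0, -1, -1, 1, 2],
     [-2, 0, 1, 1, 1, 1, 0, -2, -1, 2, 2, -1, 1, 1, 1, -1, 2, 2, 0, 0, -1, -1, 1, 2],
     [2, -1, -2, 0, 1, 1, 1, 1, 0, -2, -1, 2, 1, 1, 1, 2, -1, 2, 0, 0, -1, -1, 2, 1],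
     [-1, 2, 2, -1, -2, 0, 1, 1, 1, 1, 0, -2, 1, 1, 1, 2, 2, -1, 0, 0, -1, -1, 1, 2],
     [0, -2, -1, 2, 2, -1, -2, 0, 1, 1, 1, 1, 1, 1, 1, -1, 2, 2, 0, 0, -1, -1, 2, 1],
     [-1, 1, 2, 1, -1, 1, 2, 1, -1, 1, 2, 1, 0, 0, 0, 0, 0, 0, 0, 1, -2, 2, 1, 2],
     [1, -1, 1, 2, 1, -1, 1, 2, 1, -1, 1, 2, 0, 0, 0, 0, 0, 0, 1, 0, -2, 2, 2, 1],
     [2, 1, -1, 1, 2, 1, -1, 1, 2, 1, -1, 1, 0, 0, 0, 0, 0, 0, 0, 1, 2, -2, 2, 1],
     [1, 2, 1, -1, 1, 2, 1, -1, 1, 2, 1, -1, 0, 0, 0, 0, 0, 0, 1, 0, 2, -2, 1, 2],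
     [2, 2, 2, 2, 2, 2, 2, 2, 2, 2, 2, 2, 1, 1, 1, 2, 2, 2, 2, 2, 1, 1, -2, -2],
     [0, 0, 0, 0, 0, 0, 0, 0, 0, 0, 0, 0, 0, 0, 0, 1, 1, 1, -1, -1, -1, -1, 1, 1]]"

definition iso_matrix_inv :: "int list list" where
  "iso_matrix_inv =
    [[-5, -4, 1, -3, 0, 2, -5, 0, 5, -6, 2, 4, 3, 2, 1, 2, 2, 1, -3, -5, -3, -4, 1, -10],
     [-4, -5, 2, 0, -3, 1, -5, 4, 2, -6, 5, 0, 2, 3, 1, 2, 2, 1, -5, -3, -4, -3, 1, -10],
     [0, 2, -5, -4, 1, -3, 4, -5, 0, 5, -6, 2, 2, 1, 3, 1, 2, 2, -3, -4, -3, -5, 1, -10],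
     [-3, 1, -4, -5, 2, 0, 0, -5, 4, 2, -6, 5, 3, 1, 2, 1, 2, 2, -4, -3, -5, -3, 1, -10],
     [1, -3, 0, 2, -5, -4, 2, 4, -5, 0, 5, -6, 1, 2, 2, 3, 1, 2, -3, -5, -3, -4, 1, -10],
     [2, 0, -3, 1, -4, -5, 5, 0, -5, 4, 2, -6, 1, 2, 3, 2, 1, 2, -5, -3, -4, -3, 1, -10],
     [-5, -4, 1, -3, 0, 2, -6, 2, 4, -5, 0, 5, 2, 2, 1, 2, 3, 1, -3, -4, -3, -5, 1, -10],
     [-4, -5, 2, 0, -3, 1, -6, 5, 0, -5, 4, 2, 2, 2, 1, 3, 2, 1, -4, -3, -5, -3, 1, -10],
     [0, 2, -5, -4, 1, -3, 5, -6, 2, 4, -5, 0, 2, 1, 2, 1, 2, 3, -3, -5, -3, -4, 1, -10],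
     [-3, 1, -4, -5, 2, 0, 2, -6, 5, 0, -5, 4, 2, 1, 2, 1, 3, 2, -5, -3, -4, -3, 1, -10],
     [1, -3, 0, 2, -5, -4, 0, 5, -6, 2, 4, -5, 1, 3, 2, 2, 1, 2, -3, -4, -3, -5, 1, -10],
     [2, 0, -3, 1, -4, -5, 4, 2, -6, 5, 0, -5, 1, 2, 2, 2, 1, 3, -4, -3, -5, -3, 1, -10],
     [-12, -12, 9, -1, -1, 9, -21, 8, 8, -21, 8, 8, 2, 2, -2, 2, 2, -2, -1, -1, -1, -1, -3, -12],
     [-1, 9, -12, -12, 9, -1, 8, -21, 8, 8, -21, 8, 2, -2, 2, -2, 2, 2, -1, -1, -1, -1, -3, -12],
     [9, -1, -1, 9, -12, -12, 8, 8, -21, 8, 8, -21, -2, 2, 2, 2, -2, 2, -1, -1, -1, -1, -3, -12],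
     [10, 10, 0, 5, 5, 0, 9, -5, -5, 9, -5, -5, -7, -7, -5, -7, -7, -5, 13, 13, 13, 13, -4, 33],
     [5, 0, 10, 10, 0, 5, -5, 9, -5, -5, 9, -5, -7, -5, -7, -5, -7, -7, 13, 13, 13, 13, -4, 33],
     [0, 5, 5, 0, 10, 10, -5, -5, 9, -5, -5, 9, -5, -7, -7, -7, -5, -7, 13, 13, 13, 13, -4, 33],
     [1, 2, 1, 2, 1, 2, 3, 3, 3, 3, 3, 3, 0, 0, 0, 0, 0, 0, -3, 2, -3, 2, 6, 15],
     [2, 1, 2, 1, 2, 1, 3, 3, 3, 3, 3, 3, 0, 0, 0, 0, 0, 0, 2, -3, 2, -3, 6, 15],
     [10, 10, 10, 10, 10, 10, -6, -3, -6, -3, -6, -3, -15, -15, -15, -15, -15, -15, 32, 32, 31, 31, -17, 59],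
     [10, 10, 10, 10, 10, 10, -3, -6, -3, -6, -3, -6, -15, -15, -15, -15, -15, -15, 31, 31, 32, 32, -17, 59],
     [4, 4, 4, 4, 4, 4, -1, -1, -1, -1, -1, -1, -7, -4, -4, -7, -4, -7, 9, 14, 14, 9, -5, 25],
     [4, 4, 4, 4, 4, 4, -1, -1, -1, -1, -1, -1, -4, -7, -7, -4, -7, -4, 14, 9, 9, 14, -5, 25]]"

lemma lattice_transversals:
  "coset_transversal D6 lhs_subgroups lhs_transversal"
  "coset_transversal D6 rhs_subgroups rhs_transversal"
  unfolding coset_transversal_def subgroup_lists_eval by code_simp+

lemma transversal_permutations:
  "transversal_permutation D6 lhs_subgroups lhs_transversal (5, False) lhs_rotation_perm"
  "transversal_permutation D6 rhs_subgroups rhs_transversal (5, False) rhs_rotation_perm"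
  "transversal_permutation D6 lhs_subgroups lhs_transversal (0, True) lhs_reflection_perm"
  "transversal_permutation D6 rhs_subgroups rhs_transversal (0, True) rhs_reflection_perm"
  unfolding transversal_permutation_def subgroup_lists_eval by code_simp+

lemma iso_matrix_inverse:
  "\<forall>a\<in>{..<length lhs_transversal}. \<forall>l\<in>{..<length lhs_transversal}.
     (\<Sum>k<length rhs_transversal. iso_matrix_inv ! a ! k * iso_matrix ! k ! l) = (if a = l then 1 else 0)"
  "\<forall>a\<in>{..<length rhs_transversal}. \<forall>l\<in>{..<length rhs_transversal}.
     (\<Sum>k<length lhs_transversal. iso_matrix ! a ! k * iso_matrix_inv ! k ! l) = (if a = l then 1 else 0)"
  by code_simp+

lemma iso_matrix_invariant:
  "\<forall>a\<in>{..<length rhs_transversal}. \<forall>k\<in>{..<length lhs_transversal}.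
     iso_matrix ! (rhs_rotation_perm ! a) ! (lhs_rotation_perm ! k) = iso_matrix ! a ! k"
  "\<forall>a\<in>{..<length rhs_transversal}. \<forall>k\<in>{..<length lhs_transversal}.
     iso_matrix ! (rhs_reflection_perm ! a) ! (lhs_reflection_perm ! k) = iso_matrix ! a ! k"
  by code_simp+

lemma D6_inv_generators: "inv\<^bsub>D6\<^esub> (1, False) = (5, False)" "inv\<^bsub>D6\<^esub> (0, True) = (0, True)"
  by (rule D6.inv_equality; simp add: D6_def D6_mult_def)+

lemma D6_lattice_iso: "isomorphic_lattices D6 lhs_subgroups rhs_subgroups"
  using transversal_permutations iso_matrix_invariant
  by (intro D6.isomorphic_lattices_by_matrix
        [OF lattice_subgroups lattice_transversals iso_matrix_inverse generate_D6_generators])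
     (auto simp: D6_inv_generators)

theorem proposition6p3:
  defines "r \<equiv> rD6" and "s \<equiv> sD6"
  defines "gen \<equiv> \<lambda>S. generate D6 S"
  shows "isomorphic_lattices D6
    [ gen {},
      gen {r [^]\<^bsub>D6\<^esub> (3::nat), s}, gen {r [^]\<^bsub>D6\<^esub> (3::nat), s},
      gen {r},
      gen {r [^]\<^bsub>D6\<^esub> (2::nat), s},
      gen {r [^]\<^bsub>D6\<^esub> (2::nat), r \<otimes>\<^bsub>D6\<^esub> s} ]
    [ gen {r [^]\<^bsub>D6\<^esub> (3::nat)},
      gen {s},
      gen {r \<otimes>\<^bsub>D6\<^esub> s},
      gen {r [^]\<^bsub>D6\<^esub> (2::nat)},
      carrier D6, carrier D6 ]"
proof -
  have "r [^]\<^bsub>D6\<^esub> (2::nat) = (2, False)" "r [^]\<^bsub>D6\<^esub> (3::nat) = (3, False)"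
    "r \<otimes>\<^bsub>D6\<^esub> s = (1, True)"
    by (simp_all add: assms rD6_def sD6_def numeral_2_eq_2 numeral_3_eq_3 D6_def D6_mult_def)
  then show ?thesis
    using D6_lattice_iso generate_D6_generators
    by (simp add: assms rD6_def sD6_def lhs_subgroups_def rhs_subgroups_def)
qed

end
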